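(* Let $S_0=\{x\in\mathbb{C}:0<{\rm Im}(x)<\pi\}$. Then for all $x,y\in S_0$, $$s_{S_0}(x,y)\le{\rm th}(\rho_{S_0}(x,y)/2)\le(\pi/2)\,s_{S_0}(x,y),$$ and this inequality is sharp.
   Context: For a domain $G\subsetneq\mathbb{C}$, $s_G(x,y)=\frac{|x-y|}{\inf_{z\in\partial G}(|x-z|+|z-y|)}$. The hyperbolic metric of $\mathbb{H}^2=\{z:{\rm Im}\,z>0\}$ satisfies ${\rm th}(\rho_{\mathbb{H}^2}(u,v)/2)=|u-v|/|u-\overline{v}|$, and $\rho_{S_0}(x,y)=\rho_{\mathbb{H}^2}(e^x,e^y)$ ($z\mapsto e^z$ maps $S_0$ conformally onto $\mathbb{H}^2$). *)

theory Defs
  imports "HOL-Analysis.Analysis"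
begin

definition s_metric :: "complex set \<Rightarrow> complex \<Rightarrow> complex \<Rightarrow> real" where
  "s_metric G x y = cmod (x - y) / (INF z\<in>frontier G. cmod (x - z) + cmod (z - y))"

text \<open>Hyperbolic metric of the upper half plane, via th(rho/2) = |u-v|/|u - conj v|.\<close>
definition rho_H2 :: "complex \<Rightarrow> complex \<Rightarrow> real" where
  "rho_H2 u v = 2 * artanh (cmod (u - v) / cmod (u - cnj v))"

definition S0 :: "complex set" where
  "S0 = {x. 0 < Im x \<and> Im x < pi}"

text \<open>Hyperbolic metric of the strip S0, transported by exp onto the upper half plane.\<close>
definition rho_S0 :: "complex \<Rightarrow> complex \<Rightarrow> real" where
  "rho_S0 x y = rho_H2 (exp x) (exp y)"

end

theory Submission
  imports Defs
begin

text \<open>Put u = (Re x - Re y)/2 and a = |Im x - Im y|/2, and let b be the distance from the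
height (Im x + Im y)/2 of the midpoint to the nearer boundary line, so that 0 <= a < b <= pi/2.
Reflecting y in the two boundary lines gives s(x,y)^2 = (u^2 + a^2)/(u^2 + b^2). Since
th(rho(x,y)/2) = |e^x - e^y| / |e^x - e^(conj y)| and
|e^x - e^w|^2 = 4 e^(Re x + Re w) (sinh^2((Re x - Re w)/2) + sin^2((Im x - Im w)/2)),
also th(rho(x,y)/2)^2 = (sinh^2 u + sin^2 a)/(sinh^2 u + sin^2 b). The lower bound then follows
from u^2 <= sinh^2 u, sin^2 b - sin^2 a <= b^2 - a^2 and the decrease of sin t / t; the upper
bound from sin a <= a, Jordan's inequality sin b >= 2b/pi and 9 (sinh^2 u - u^2) <= 5 u^2 sinh^2 u.
Sharpness: for x = 3ei, y = ei the quotient th/s equals 1/cos e, which tends to 1, and for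
x, y = +-v + i pi/2 it equals tanh v sqrt(v^2 + pi^2/4)/v, which tends to pi/2, as e, v -> 0.\<close>

lemma x_cos_le_sin:
  fixes x :: real
  assumes "0 \<le> x" "x \<le> pi"
  shows "x * cos x \<le> sin x"
proof -
  have "(\<lambda>x. sin x - x * cos x) 0 \<le> (\<lambda>x. sin x - x * cos x) x"
  proof (rule DERIV_nonneg_imp_nondecreasing[of 0 x])
    fix y assume y: "0 \<le> y" "y \<le> x"
    show "\<exists>d. ((\<lambda>x. sin x - x * cos x) has_real_derivative d) (at y) \<and> d \<ge> 0"
      using y assms
      by (intro exI[of _ "y * sin y"]) (auto intro!: derivative_eq_intros sin_ge_zero mult_nonneg_nonneg)
  qed (use assms in auto)
  then show ?thesis
    by simp
qed

lemma sin_div_antimono: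
  fixes a b :: real
  assumes "0 < a" "a \<le> b" "b \<le> pi"
  shows "sin b / b \<le> sin a / a"
proof (rule DERIV_nonpos_imp_nonincreasing[of a b "\<lambda>x. sin x / x"])
  fix x assume x: "a \<le> x" "x \<le> b"
  then have "0 < x"
    using assms by auto
  then show "\<exists>y. DERIV (\<lambda>x. sin x / x) x :> y \<and> y \<le> 0"
    using x_cos_le_sin[of x] x assms
    by (intro exI[of _ "(x * cos x - sin x) / x^2"])
      (auto intro!: derivative_eq_intros divide_nonpos_pos simp: field_simps power2_eq_square)
qed (use assms in auto)

lemma jordan_inequality:
  fixes x :: real
  assumes "0 \<le> x" "x \<le> pi / 2"
  shows "2 * x / pi \<le> sin x"
proof (cases "x = 0")
  case False
  then have "sin (pi / 2) / (pi / 2) \<le> sin x / x"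
    using assms by (intro sin_div_antimono) auto
  then show ?thesis
    using False assms by (simp add: field_simps)
qed simp

lemma sin_sq_diff_le_sq_diff:
  fixes a b :: real
  assumes "0 \<le> a" "a \<le> b" "b \<le> a + pi"
  shows "sin b ^ 2 - sin a ^ 2 \<le> b ^ 2 - a ^ 2"
proof -
  have "sin (b + a) * sin (b - a) = sin b ^ 2 * cos a ^ 2 - cos b ^ 2 * sin a ^ 2"
    by (simp add: sin_add sin_diff power2_eq_square algebra_simps)
  then have "sin b ^ 2 - sin a ^ 2 = sin (b + a) * sin (b - a)"
    by (simp add: cos_squared_eq algebra_simps)
  also have "\<dots> \<le> (b + a) * (b - a)"
    using assms by (intro mult_mono sin_x_le_x sin_ge_zero) auto
  also have "\<dots> = b ^ 2 - a ^ 2"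
    by (simp add: algebra_simps power2_eq_square)
  finally show ?thesis .
qed

lemma sq_le_sinh_sq:
  fixes u :: real
  shows "u ^ 2 \<le> sinh u ^ 2"
proof -
  have "\<bar>u\<bar> \<le> \<bar>sinh u\<bar>"
    unfolding sinh_field_def exp_minus by (rule real_le_abs_sinh)
  then show ?thesis
    by (simp add: abs_le_square_iff)
qed

lemma sinh_le_quintic:
  fixes u :: real
  assumes "0 \<le> u" "u \<le> 3 / 2"
  shows "sinh u \<le> u + u ^ 3 / 6 + u ^ 5 / 22"
proof -
  obtain t1 where t1: "\<bar>t1\<bar> \<le> \<bar>u\<bar>"
    "exp u = (\<Sum>m<5. u ^ m / fact m) + exp t1 / fact 5 * u ^ 5"
    using Maclaurin_exp_le[of u 5] by blast
  obtain t2 where t2: "\<bar>t2\<bar> \<le> \<bar>-u\<bar>"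
    "exp (-u) = (\<Sum>m<5. (-u) ^ m / fact m) + exp t2 / fact 5 * (-u) ^ 5"
    using Maclaurin_exp_le[of "-u" 5] by blast
  have "exp (3 / 4 :: real) \<le> 37 / 16"
    using exp_bound[of "3 / 4"] by (simp add: power2_eq_square)
  then have "exp (3 / 4 :: real) * exp (3 / 4) \<le> 37 / 16 * (37 / 16)"
    by (intro mult_mono) auto
  then have "exp (3 / 2 :: real) \<le> 1369 / 256"
    by (simp add: mult_exp_exp)
  then have "exp u \<le> 1369 / 256"
    using assms by (meson exp_le_cancel_iff order_trans)
  moreover have "exp t1 \<le> exp u" "exp t2 \<le> exp u"
    using t1(1) t2(1) assms by auto
  ultimately have remainder: "exp t1 + exp t2 \<le> 2 * (1369 / 256)"
    by linarith
  have "sinh u = u + u ^ 3 / 6 + (exp t1 + exp t2) / 240 * u ^ 5"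
    unfolding sinh_field_def t1(2) t2(2) by (simp add: numeral_eq_Suc fact_numeral field_simps)
  also have "\<dots> \<le> u + u ^ 3 / 6 + 2 * (1369 / 256) / 240 * u ^ 5"
    using remainder assms by (intro add_left_mono mult_right_mono divide_right_mono) auto
  also have "\<dots> \<le> u + u ^ 3 / 6 + u ^ 5 / 22"
    using assms by simp
  finally show ?thesis .
qed

lemma sinh_sq_minus_sq_le:
  fixes u :: real
  shows "9 * (sinh u ^ 2 - u ^ 2) \<le> 5 * u ^ 2 * sinh u ^ 2"
proof -
  define v where "v = \<bar>u\<bar>"
  have v: "0 \<le> v" "sinh u ^ 2 = sinh v ^ 2" "u ^ 2 = v ^ 2"
    by (simp_all add: v_def)
  show ?thesis
  proof (cases "9 / 5 \<le> v ^ 2")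
    case True
    then have "9 / 5 * sinh v ^ 2 \<le> v ^ 2 * sinh v ^ 2"
      by (intro mult_right_mono) auto
    then show ?thesis
      using True v by (simp add: algebra_simps)
  next
    case False
    have "v \<le> 3 / 2"
    proof (rule ccontr)
      assume "\<not> v \<le> 3 / 2"
      then have "(3 / 2) ^ 2 < v ^ 2"
        by (intro power_strict_mono) auto
      with False show False
        by (simp add: power2_eq_square)
    qed
    then have "sinh v ^ 2 \<le> (v + v ^ 3 / 6 + v ^ 5 / 22) ^ 2"
      using sinh_le_quintic v(1) by (intro power_mono) auto
    then have "sinh v ^ 2 * (9 - 5 * v ^ 2) \<le> (v + v ^ 3 / 6 + v ^ 5 / 22) ^ 2 * (9 - 5 * v ^ 2)"
      using False by (intro mult_right_mono) auto
    also have "\<dots> = 9 * v ^ 2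
        - v ^ 4 * (2 + 79/132 * v ^ 2 + 181/396 * v ^ 4 + 83/1452 * v ^ 6 + 5/484 * v ^ 8)"
      by (simp add: field_simps power2_eq_square power3_eq_cube power4_eq_xxxx eval_nat_numeral)
    also have "\<dots> \<le> 9 * v ^ 2"
      using v(1) by (simp add: add_nonneg_nonneg)
    finally show ?thesis
      using v by (simp add: algebra_simps)
  qed
qed

lemma pi_sq_sinh_sq_gap_le:
  fixes u :: real
  shows "pi ^ 2 / 4 * (sinh u ^ 2 - u ^ 2) \<le> (pi ^ 2 / 4 - 1) * (u ^ 2 * sinh u ^ 2)"
proof -
  define k where "k = pi ^ 2 / 4"
  have "9 / 4 \<le> k"
    unfolding k_def using mult_mono[of 3 pi 3 pi] pi_gt3 by (simp add: power2_eq_square)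
  then have "5 * k * (u ^ 2 * sinh u ^ 2) \<le> 9 * (k - 1) * (u ^ 2 * sinh u ^ 2)"
    by (intro mult_right_mono) auto
  moreover have "k * (9 * (sinh u ^ 2 - u ^ 2)) \<le> k * (5 * u ^ 2 * sinh u ^ 2)"
    using sinh_sq_minus_sq_le[of u] \<open>9 / 4 \<le> k\<close> by (intro mult_left_mono) auto
  ultimately show ?thesis
    unfolding k_def[symmetric] by (simp add: algebra_simps)
qed

lemma exists_cos_gt_inverse:
  fixes c :: real
  assumes "1 < c"
  shows "\<exists>e. 0 < e \<and> e \<le> pi / 4 \<and> 1 < c * cos e"
proof -
  define e where "e = arccos (1 / c) / 2"
  have "0 < 1 / c" "1 / c < 1"
    using assms by simp_all
  then have "0 < arccos (1 / c)" "arccos (1 / c) \<le> pi / 2"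
    using arccos_lt_bounded[of "1 / c"] arccos_le_pi2[of "1 / c"] by linarith+
  then have e: "0 < e" "e \<le> pi / 4"
    by (simp_all add: e_def)
  have "-1 \<le> 1 / c" "1 / c \<le> 1"
    using \<open>0 < 1 / c\<close> \<open>1 / c < 1\<close> by linarith+
  then have "1 / c = cos (arccos (1 / c))"
    by (rule cos_arccos[symmetric])
  also have "\<dots> < cos e"
    using e \<open>arccos (1 / c) \<le> pi / 2\<close> by (intro cos_monotone_0_pi) (auto simp: e_def)
  finally have "1 < c * cos e"
    using assms by (simp add: field_simps)
  then show ?thesis
    using e by blast
qed

lemma exists_mult_le_tanh:
  fixes r :: real
  assumes "r < 1"
  shows "\<exists>v>0. r * v \<le> tanh v"
proof (cases "r \<le> 0")
  case True
  then have "r * 1 \<le> tanh 1"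
    using tanh_real_nonneg_iff[of 1] by linarith
  then show ?thesis
    using zero_less_one by blast
next
  case False
  define v where "v = - ln r"
  have v: "0 < v" "exp v = 1 / r"
    using False assms by (simp_all add: v_def exp_minus inverse_eq_divide)
  have "r * cosh v \<le> r * exp v"
    using False v(1) by (intro mult_left_mono) (auto simp: cosh_field_def)
  then have "r * v * cosh v \<le> v"
    using v False by (simp add: mult_ac)
  also have "v \<le> sinh v"
    using real_le_x_sinh[of v] v by (simp add: sinh_field_def exp_minus)
  finally have "r * v \<le> tanh v"
    by (simp add: tanh_def field_simps cosh_real_pos)
  then show ?thesis
    using v by blast
qed

lemma sq_ratio_le_sinh_sin_ratio:
  fixes u a b :: real
  assumes "0 \<le> a" "a < b" "b < pi"
  shows "(u ^ 2 + a ^ 2) / (u ^ 2 + b ^ 2) \<le> (sinh u ^ 2 + sin a ^ 2) / (sinh u ^ 2 + sin b ^ 2)"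
proof -
  have cross: "a ^ 2 * sin b ^ 2 \<le> b ^ 2 * sin a ^ 2"
  proof (cases "a = 0")
    case False
    then have "sin b / b \<le> sin a / a"
      using assms by (intro sin_div_antimono) auto
    then have "a * sin b \<le> b * sin a"
      using False assms by (simp add: field_simps)
    moreover have "0 \<le> a * sin b"
      using assms by (intro mult_nonneg_nonneg sin_ge_zero) auto
    ultimately have "(a * sin b) ^ 2 \<le> (b * sin a) ^ 2"
      by (intro power_mono) auto
    then show ?thesis
      by (simp add: power_mult_distrib)
  qed simp
  have "u ^ 2 * (sin b ^ 2 - sin a ^ 2) \<le> u ^ 2 * (b ^ 2 - a ^ 2)"
    using assms by (intro mult_left_mono sin_sq_diff_le_sq_diff) auto
  also have "\<dots> \<le> sinh u ^ 2 * (b ^ 2 - a ^ 2)"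
    using assms by (intro mult_right_mono sq_le_sinh_sq power_mono) auto
  finally have "(u ^ 2 + a ^ 2) * (sinh u ^ 2 + sin b ^ 2) \<le> (sinh u ^ 2 + sin a ^ 2) * (u ^ 2 + b ^ 2)"
    using cross by (simp add: algebra_simps)
  moreover have "0 < sin b"
    using assms by (intro sin_gt_zero) auto
  then have "0 < sinh u ^ 2 + sin b ^ 2"
    by (simp add: add_nonneg_pos)
  moreover have "0 < u ^ 2 + b ^ 2"
    using assms by (simp add: add_nonneg_pos)
  ultimately show ?thesis
    by (simp add: divide_simps)
qed

lemma sinh_sin_ratio_le_sq_ratio:
  fixes u a b :: real
  assumes "0 \<le> a" "a < b" "b \<le> pi / 2"
  shows "(sinh u ^ 2 + sin a ^ 2) / (sinh u ^ 2 + sin b ^ 2)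
       \<le> pi ^ 2 / 4 * ((u ^ 2 + a ^ 2) / (u ^ 2 + b ^ 2))"
proof -
  define s w A B sa sb k where "s = sinh u ^ 2" "w = u ^ 2" "A = a ^ 2" "B = b ^ 2"
    "sa = sin a ^ 2" "sb = sin b ^ 2" "k = pi ^ 2 / 4"
  note defs = s_w_A_B_sa_sb_k_def
  have w: "0 \<le> w" "w \<le> s"
    unfolding defs by (simp_all add: sq_le_sinh_sq)
  have "0 < sin b"
    using assms by (intro sin_gt_zero) auto
  then have sb: "0 < sb"
    unfolding defs by simp
  have AB: "0 \<le> A" "0 < B"
    unfolding defs using assms by auto
  have k: "1 \<le> k"
    unfolding defs using mult_mono[of 2 pi 2 pi] pi_gt3 by (simp add: power2_eq_square)
  have sa: "sa \<le> A"
    unfolding defs using abs_sin_x_le_abs_x[of a] by (simp add: abs_le_square_iff)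
  have B_le_k: "B \<le> k"
    unfolding defs using assms power_mono[of "b * 2" pi 2] by (simp add: power_mult_distrib)
  have "(2 * b / pi) ^ 2 \<le> sin b ^ 2"
    using assms jordan_inequality[of b] by (intro power_mono) auto
  then have B_le_k_sb: "B \<le> k * sb"
    unfolding defs by (simp add: power_divide power_mult_distrib field_simps)
  have sinh_gap: "k * (s - w) \<le> (k - 1) * (w * s)"
    unfolding defs by (rule pi_sq_sinh_sq_gap_le)
  have "(s + sa) * (w + B) \<le> (s + A) * (w + B)"
    using sa w AB by (intro mult_right_mono) auto
  also have "\<dots> = s * w + B * (s - w) + w * B + A * w + A * B"
    by (simp add: algebra_simps)
  also have "\<dots> \<le> s * w + k * (s - w) + w * (k * sb) + A * (k * s) + A * (k * sb)"
  proof -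
    have "w \<le> k * s"
      using w k mult_right_mono[of 1 k s] by simp
    then show ?thesis
      using B_le_k B_le_k_sb w AB
      by (intro add_mono mult_left_mono mult_right_mono order_refl) auto
  qed
  also have "\<dots> \<le> k * (w + A) * (s + sb)"
    using sinh_gap by (simp add: algebra_simps)
  finally show ?thesis
    unfolding defs[symmetric] using sb AB w by (simp add: divide_simps)
qed

lemma open_S0: "open S0"
  unfolding S0_def by (intro open_Collect_conj open_Collect_less continuous_intros)

lemma frontier_S0: "frontier S0 = {z. Im z = 0 \<or> Im z = pi}"
proof -
  have S0_eq: "S0 = {z. \<i> \<bullet> z > 0} \<inter> {z. \<i> \<bullet> z < pi}"
    unfolding S0_def by auto
  have "\<i> * of_real (pi / 2) \<in> {z. \<i> \<bullet> z > 0} \<inter> {z. \<i> \<bullet> z < pi}"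
    by simp
  then have "closure S0 = {z. \<i> \<bullet> z \<ge> 0} \<inter> {z. \<i> \<bullet> z \<le> pi}"
    unfolding S0_eq
    by (subst closure_Int_convex) (auto simp: convex_halfspace_gt convex_halfspace_lt
        rel_interior_open open_halfspace_gt open_halfspace_lt simp del: complex_inner_i_left)
  then have closure_S0: "closure S0 = {z. 0 \<le> Im z \<and> Im z \<le> pi}"
    by auto
  show ?thesis
    unfolding frontier_def interior_open[OF open_S0] closure_S0
    using pi_gt_zero by (auto simp: S0_def)
qed

lemma cmod_diff_reflect:
  assumes "Im z = c"
  shows "cmod (z - y) = cmod (z - Complex (Re y) (2 * c - Im y))"
proof -
  have "cnj (z - y) = z - Complex (Re y) (2 * c - Im y)"
    using assms by (simp add: complex_eq_iff)
  then show ?thesis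
    by (metis complex_mod_cnj)
qed

lemma INF_line_sum_cmod:
  assumes same_side: "0 < (Im x - c) * (Im y - c)"
  shows "(INF z\<in>{z. Im z = c}. cmod (x - z) + cmod (z - y))
       = cmod (x - Complex (Re y) (2 * c - Im y))"
proof -
  define y' where "y' = Complex (Re y) (2 * c - Im y)"
  define t where "t = (Im x - c) / ((Im x - c) + (Im y - c))"
  define z0 where "z0 = x + of_real t * (y' - x)"
  have "0 \<le> t" "t \<le> 1"
    using same_side by (auto simp: t_def zero_less_mult_iff divide_simps)
  then have "z0 \<in> closed_segment x y'"
    unfolding z0_def in_segment by (intro exI[of _ t]) (simp add: algebra_simps scaleR_conv_of_real)
  then have z0_sum: "cmod (x - z0) + cmod (z0 - y') = cmod (x - y')"
    by (metis between between_mem_segment dist_complex_def)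
  have "(Im x - c) + (Im y - c) \<noteq> 0"
    using same_side by (auto simp: zero_less_mult_iff)
  then have z0_line: "Im z0 = c"
    by (simp add: z0_def y'_def t_def field_simps)
  show ?thesis
    unfolding y'_def[symmetric]
  proof (rule cInf_eq_minimum)
    have "cmod (x - z0) + cmod (z0 - y) = cmod (x - y')"
      using z0_sum cmod_diff_reflect[OF z0_line, of y] unfolding y'_def by simp
    then show "cmod (x - y') \<in> (\<lambda>z. cmod (x - z) + cmod (z - y)) ` {z. Im z = c}"
      using z0_line by (metis (mono_tags, lifting) image_eqI mem_Collect_eq)
  next
    fix r assume "r \<in> (\<lambda>z. cmod (x - z) + cmod (z - y)) ` {z. Im z = c}"
    then obtain z where z: "Im z = c" "r = cmod (x - z) + cmod (z - y)"
      by blast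
    then have "r = cmod (x - z) + cmod (z - y')"
      using cmod_diff_reflect[OF z(1), of y] unfolding y'_def by simp
    then show "cmod (x - y') \<le> r"
      using norm_triangle_ineq[of "x - z" "z - y'"] by simp
  qed
qed

lemma s_metric_S0:
  assumes "x \<in> S0" "y \<in> S0"
  shows "s_metric S0 x y
       = cmod (x - y) / min (cmod (x - cnj y)) (cmod (x - Complex (Re y) (2 * pi - Im y)))"
proof -
  define f where "f z = cmod (x - z) + cmod (z - y)" for z
  have bdd: "bdd_below (f ` A)" for A
    unfolding f_def by (rule bdd_belowI[of _ 0]) auto
  have "Complex 0 0 \<in> {z. Im z = 0}" "Complex 0 pi \<in> {z. Im z = pi}"
    by simp_all
  then have nonempty: "{z. Im z = 0} \<noteq> {}" "{z. Im z = pi} \<noteq> {}"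
    by blast+
  have cnj_reflection: "Complex (Re y) (2 * 0 - Im y) = cnj y"
    by (simp add: complex_eq_iff)
  have "0 < Im x" "Im x < pi" "0 < Im y" "Im y < pi"
    using assms by (auto simp: S0_def)
  then have "0 < (Im x - 0) * (Im y - 0)" "0 < (Im x - pi) * (Im y - pi)"
    by (simp_all add: mult_neg_neg)
  then have "(INF z\<in>{z. Im z = 0}. f z) = cmod (x - cnj y)"
    "(INF z\<in>{z. Im z = pi}. f z) = cmod (x - Complex (Re y) (2 * pi - Im y))"
    using INF_line_sum_cmod[of x 0 y] INF_line_sum_cmod[of x pi y] cnj_reflection
    by (simp_all add: f_def)
  moreover have "(INF z\<in>frontier S0. f z)
      = min (INF z\<in>{z. Im z = 0}. f z) (INF z\<in>{z. Im z = pi}. f z)"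
    unfolding frontier_S0 Collect_disj_eq inf_real_def[symmetric]
    by (rule cINF_union[OF nonempty(1) bdd nonempty(2) bdd])
  ultimately show ?thesis
    by (simp add: s_metric_def f_def)
qed

lemma cmod_exp_diff_sq:
  "cmod (exp x - exp w) ^ 2
     = 4 * exp (Re x + Re w) * (sinh ((Re x - Re w) / 2) ^ 2 + sin ((Im x - Im w) / 2) ^ 2)"
proof -
  define a b p q where "a = Re x" "b = Re w" "p = Im x" "q = Im w"
  have "exp ((a + b) / 2) * exp ((a - b) / 2) = exp a"
    "exp ((a + b) / 2) * exp (- ((a - b) / 2)) = exp b"
    unfolding mult_exp_exp by (simp_all add: field_simps)
  then have "exp a - exp b = 2 * exp ((a + b) / 2) * sinh ((a - b) / 2)"
    by (simp add: sinh_field_def right_diff_distrib)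
  moreover have "exp ((a + b) / 2) ^ 2 = exp (a + b)"
    unfolding power2_eq_square mult_exp_exp by simp
  ultimately have sinh: "(exp a - exp b) ^ 2 = 4 * exp (a + b) * sinh ((a - b) / 2) ^ 2"
    by (simp add: power_mult_distrib)
  have "cos (p - q) = cos (2 * ((p - q) / 2))"
    by (simp only: mult_2 field_sum_of_halves)
  then have sin: "1 - cos (p - q) = 2 * sin ((p - q) / 2) ^ 2"
    unfolding cos_double_sin by simp
  have "cmod (exp x - exp w) ^ 2
      = exp a ^ 2 * (sin p ^ 2 + cos p ^ 2) + exp b ^ 2 * (sin q ^ 2 + cos q ^ 2)
        - 2 * exp a * exp b * (cos p * cos q + sin p * sin q)"
    unfolding cmod_power2 a_b_p_q_def
    by (simp add: Re_exp Im_exp power2_eq_square algebra_simps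
        del: sin_cos_squared_add sin_cos_squared_add2 sin_cos_squared_add3)
  also have "\<dots> = (exp a - exp b) ^ 2 + 2 * exp a * exp b * (1 - cos (p - q))"
    by (simp add: cos_diff power2_eq_square algebra_simps)
  also have "\<dots> = 4 * exp (a + b) * (sinh ((a - b) / 2) ^ 2 + sin ((p - q) / 2) ^ 2)"
    unfolding sinh sin by (simp add: mult_exp_exp algebra_simps)
  finally show ?thesis
    by (simp add: a_b_p_q_def)
qed

lemma tanh_artanh_real:
  fixes t :: real
  assumes "-1 < t" "t < 1"
  shows "tanh (artanh t) = t"
proof -
  have exp_artanh: "exp (- 2 * artanh t) = (1 - t) / (1 + t)"
    using assms by (simp add: artanh_def exp_minus)
  show ?thesis
    unfolding tanh_real_altdef exp_artanh using assms by (simp add: field_simps)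
qed

lemma tanh_half_rho_H2:
  assumes "0 < Im u" "0 < Im v"
  shows "tanh (rho_H2 u v / 2) = cmod (u - v) / cmod (u - cnj v)"
proof -
  have "cmod (u - v) ^ 2 < cmod (u - cnj v) ^ 2"
    unfolding cmod_power2 using assms by (simp add: power2_eq_square algebra_simps)
  then have "cmod (u - v) < cmod (u - cnj v)"
    by (rule power_less_imp_less_base) simp
  then have "cmod (u - v) / cmod (u - cnj v) < 1"
    using norm_ge_zero[of "u - v"] by (simp add: divide_less_eq_1)
  moreover have "-1 < cmod (u - v) / cmod (u - cnj v)"
    using divide_nonneg_nonneg[OF norm_ge_zero norm_ge_zero, of "u - v" "u - cnj v"] by linarith
  ultimately show ?thesis
    unfolding rho_H2_def by (simp add: tanh_artanh_real)
qed

lemma tanh_half_rho_S0: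
  assumes "x \<in> S0" "y \<in> S0"
  shows "tanh (rho_S0 x y / 2) = cmod (exp x - exp y) / cmod (exp x - exp (cnj y))"
proof -
  have "0 < Im (exp z)" if "z \<in> S0" for z
    using that by (auto simp: S0_def Im_exp intro!: mult_pos_pos sin_gt_zero)
  then show ?thesis
    using assms by (simp add: rho_S0_def tanh_half_rho_H2 exp_cnj)
qed

lemma div_eq_sqrt_div:
  fixes p q k X Y :: real
  assumes "0 \<le> p" "0 \<le> q" "0 < k" "p ^ 2 = k * X" "q ^ 2 = k * Y"
  shows "p / q = sqrt (X / Y)"
proof -
  have "p / q = sqrt (p ^ 2 / q ^ 2)"
    using assms(1,2) by (simp add: real_sqrt_divide)
  then show ?thesis
    using assms(3-5) by simp
qed

lemma S0_half_coordinates_bounds: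
  assumes "x \<in> S0" "y \<in> S0"
  defines "a \<equiv> \<bar>Im x - Im y\<bar> / 2"
    and "b \<equiv> min ((Im x + Im y) / 2) (pi - (Im x + Im y) / 2)"
  shows "0 \<le> a" and "a < b" and "b \<le> pi / 2"
proof -
  define m where "m = (Im x + Im y) / 2"
  have "0 < Im x" "Im x < pi" "0 < Im y" "Im y < pi"
    using assms(1,2) by (auto simp: S0_def)
  then have "\<bar>Im x - Im y\<bar> < Im x + Im y" "\<bar>Im x - Im y\<bar> < 2 * pi - Im x - Im y"
    by (auto simp: abs_if)
  then show "a < b"
    unfolding a_def b_def min_less_iff_conj by (intro conjI) (simp_all add: field_simps)
  show "0 \<le> a"
    by (simp add: a_def)
  show "b \<le> pi / 2"
    unfolding b_def m_def[symmetric] by (simp add: min_def)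
qed

lemma s_metric_S0_eq_sqrt:
  assumes "x \<in> S0" "y \<in> S0"
  defines "u \<equiv> (Re x - Re y) / 2"
    and "a \<equiv> \<bar>Im x - Im y\<bar> / 2"
    and "b \<equiv> min ((Im x + Im y) / 2) (pi - (Im x + Im y) / 2)"
  shows "s_metric S0 x y = sqrt ((u ^ 2 + a ^ 2) / (u ^ 2 + b ^ 2))"
proof -
  define m where "m = (Im x + Im y) / 2"
  have "0 < m" "m < pi"
    using assms(1,2) by (auto simp: S0_def m_def)
  have "cmod (x - y) ^ 2 = 4 * (u ^ 2 + a ^ 2)"
    unfolding cmod_power2 by (simp add: u_def a_def power2_eq_square field_simps)
  moreover have "min (cmod (x - cnj y)) (cmod (x - Complex (Re y) (2 * pi - Im y))) ^ 2
      = 4 * (u ^ 2 + b ^ 2)"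
  proof -
    have "cmod (x - cnj y) ^ 2 = 4 * (u ^ 2 + m ^ 2)"
      "cmod (x - Complex (Re y) (2 * pi - Im y)) ^ 2 = 4 * (u ^ 2 + (pi - m) ^ 2)"
      unfolding cmod_power2 by (simp_all add: u_def m_def power2_eq_square field_simps)
    moreover have "min c d ^ 2 = min (c ^ 2) (d ^ 2)" if "0 \<le> c" "0 \<le> d" for c d :: real
      using that by (auto simp: min_def abs_le_square_iff[symmetric])
    moreover have "b ^ 2 = min (m ^ 2) ((pi - m) ^ 2)"
      using \<open>0 < m\<close> \<open>m < pi\<close> by (auto simp: b_def m_def[symmetric] min_def abs_le_square_iff[symmetric])
    ultimately show ?thesis
      by (simp add: min_add_distrib_left min_mult_distrib_left)
  qed
  ultimately show ?thesis
    unfolding s_metric_S0[OF assms(1,2)] by (intro div_eq_sqrt_div[where k = 4]) auto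
qed

lemma tanh_half_rho_S0_eq_sqrt:
  assumes "x \<in> S0" "y \<in> S0"
  defines "u \<equiv> (Re x - Re y) / 2"
    and "a \<equiv> \<bar>Im x - Im y\<bar> / 2"
    and "b \<equiv> min ((Im x + Im y) / 2) (pi - (Im x + Im y) / 2)"
  shows "tanh (rho_S0 x y / 2) = sqrt ((sinh u ^ 2 + sin a ^ 2) / (sinh u ^ 2 + sin b ^ 2))"
proof -
  have "sin \<bar>t\<bar> ^ 2 = sin t ^ 2" for t :: real
    by (simp add: abs_if)
  then have "sin a ^ 2 = sin ((Im x - Im y) / 2) ^ 2"
    unfolding a_def by (metis abs_divide abs_numeral)
  then have "cmod (exp x - exp y) ^ 2 = 4 * exp (Re x + Re y) * (sinh u ^ 2 + sin a ^ 2)"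
    by (simp add: cmod_exp_diff_sq u_def)
  moreover have "sin b ^ 2 = sin ((Im x + Im y) / 2) ^ 2"
    by (simp add: b_def min_def)
  then have "cmod (exp x - exp (cnj y)) ^ 2 = 4 * exp (Re x + Re y) * (sinh u ^ 2 + sin b ^ 2)"
    by (simp add: cmod_exp_diff_sq u_def)
  ultimately show ?thesis
    unfolding tanh_half_rho_S0[OF assms(1,2)]
    by (intro div_eq_sqrt_div[where k = "4 * exp (Re x + Re y)"]) auto
qed

lemma s_metric_S0_le_tanh_half_rho_S0:
  assumes "x \<in> S0" "y \<in> S0"
  shows "s_metric S0 x y \<le> tanh (rho_S0 x y / 2)"
proof -
  note bounds = S0_half_coordinates_bounds[OF assms]
  have "min ((Im x + Im y) / 2) (pi - (Im x + Im y) / 2) < pi"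
    using bounds(3) pi_gt_zero by linarith
  then show ?thesis
    unfolding s_metric_S0_eq_sqrt[OF assms] tanh_half_rho_S0_eq_sqrt[OF assms]
    using bounds(1,2) by (intro real_sqrt_le_mono sq_ratio_le_sinh_sin_ratio)
qed

lemma tanh_half_rho_S0_le_s_metric_S0:
  assumes "x \<in> S0" "y \<in> S0"
  shows "tanh (rho_S0 x y / 2) \<le> pi / 2 * s_metric S0 x y"
proof -
  have sqrt_pi: "sqrt (pi ^ 2 / 4) = pi / 2"
    by (simp add: real_sqrt_divide)
  show ?thesis
    using real_sqrt_le_mono[OF sinh_sin_ratio_le_sq_ratio[of _ _ "(Re x - Re y) / 2",
          OF S0_half_coordinates_bounds[OF assms]]]
    unfolding s_metric_S0_eq_sqrt[OF assms] tanh_half_rho_S0_eq_sqrt[OF assms] real_sqrt_mult sqrt_pi .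
qed

lemma s_metric_S0_le_tanh_half_rho_S0_sharp:
  fixes c :: real
  assumes "1 < c"
  shows "\<exists>x\<in>S0. \<exists>y\<in>S0. x \<noteq> y \<and> tanh (rho_S0 x y / 2) < c * s_metric S0 x y"
proof -
  obtain e where e: "0 < e" "e \<le> pi / 4" "1 < c * cos e"
    using exists_cos_gt_inverse[OF assms] by blast
  define x y where "x = Complex 0 (3 * e)" and "y = Complex 0 e"
  have xy: "x \<in> S0" "y \<in> S0" "x \<noteq> y"
    using e pi_gt_zero by (auto simp: x_def y_def S0_def)
  have "min (2 * e) (pi - 2 * e) = 2 * e"
    using e by simp
  then have half: "s_metric S0 x y = sqrt (e ^ 2 / (2 * e) ^ 2)"
    "tanh (rho_S0 x y / 2) = sqrt (sin e ^ 2 / sin (2 * e) ^ 2)"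
    using s_metric_S0_eq_sqrt[OF xy(1,2)] tanh_half_rho_S0_eq_sqrt[OF xy(1,2)] e
    by (simp_all add: x_def y_def)
  have "0 < sin e" "0 < cos e"
    using e pi_gt_zero by (auto intro!: sin_gt_zero cos_gt_zero)
  then have "tanh (rho_S0 x y / 2) = 1 / (2 * cos e)" "s_metric S0 x y = 1 / 2"
    unfolding half using e by (simp_all add: real_sqrt_divide sin_double)
  moreover have "1 / (2 * cos e) < c * (1 / 2)"
    using e(3) \<open>0 < cos e\<close> by (simp add: field_simps)
  ultimately show ?thesis
    using xy by (metis (no_types))
qed

lemma tanh_half_rho_S0_le_s_metric_S0_sharp:
  fixes c :: real
  assumes "c < pi / 2"
  shows "\<exists>x\<in>S0. \<exists>y\<in>S0. x \<noteq> y \<and> c * s_metric S0 x y < tanh (rho_S0 x y / 2)"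
proof -
  obtain v where v: "0 < v" "2 * c / pi * v \<le> tanh v"
    using exists_mult_le_tanh[of "2 * c / pi"] assms by (auto simp: field_simps)
  define x y where "x = Complex v (pi / 2)" and "y = Complex (- v) (pi / 2)"
  have xy: "x \<in> S0" "y \<in> S0" "x \<noteq> y"
    using v pi_gt_zero by (auto simp: x_def y_def S0_def)
  have s: "s_metric S0 x y = v / sqrt (v ^ 2 + (pi / 2) ^ 2)"
    using s_metric_S0_eq_sqrt[OF xy(1,2)] v by (simp add: x_def y_def real_sqrt_divide)
  have th: "tanh (rho_S0 x y / 2) = tanh v"
    using tanh_half_rho_S0_eq_sqrt[OF xy(1,2)] v
    by (simp add: x_def y_def tanh_def real_sqrt_divide cosh_square_eq[symmetric] cosh_real_pos)
  have "pi / 2 < sqrt (v ^ 2 + (pi / 2) ^ 2)"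
    using v by (intro real_less_rsqrt) simp
  then have "s_metric S0 x y < v / (pi / 2)"
    unfolding s using v(1) pi_gt_zero by (intro divide_strict_left_mono mult_pos_pos) linarith+
  then have "c * s_metric S0 x y < tanh v"
  proof (cases "c \<le> 0")
    case True
    then have "c * s_metric S0 x y \<le> 0"
      unfolding s using v(1) by (intro mult_nonpos_nonneg) auto
    moreover have "0 < tanh v"
      using v(1) by simp
    ultimately show ?thesis
      by linarith
  next
    case False
    then have "c * s_metric S0 x y < c * (v / (pi / 2))"
      using \<open>s_metric S0 x y < v / (pi / 2)\<close> by (intro mult_strict_left_mono) auto
    also have "\<dots> = 2 * c / pi * v"
      by simp
    finally show ?thesis
      using v(2) by linarith
  qed
  then show ?thesis
    using xy th by metis
qed

theorem theorem4p10:
  shows "(\<forall>x\<in>S0. \<forall>y\<in>S0.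
            s_metric S0 x y \<le> tanh (rho_S0 x y / 2) \<and>
            tanh (rho_S0 x y / 2) \<le> (pi / 2) * s_metric S0 x y)
       \<and> (\<forall>c>1. \<exists>x\<in>S0. \<exists>y\<in>S0. x \<noteq> y \<and> tanh (rho_S0 x y / 2) < c * s_metric S0 x y)
       \<and> (\<forall>c<pi / 2. \<exists>x\<in>S0. \<exists>y\<in>S0. x \<noteq> y \<and> c * s_metric S0 x y < tanh (rho_S0 x y / 2))"
  using s_metric_S0_le_tanh_half_rho_S0 tanh_half_rho_S0_le_s_metric_S0
    s_metric_S0_le_tanh_half_rho_S0_sharp tanh_half_rho_S0_le_s_metric_S0_sharp
  by blast

end
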